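(* Let $D$ be a Krull domain. Then the set $\mathrm{Princ}(D)$ of principal ideals of $D$ is proconstructible in $\mathcal I(D)$.
   Context: $\mathcal I(D)$ is the set of ideals of $D$ with the Zariski topology having basis of open sets $\mathcal B(x_1,\ldots,x_n):=\{I\in\mathcal I(D)\mid x_1,\ldots,x_n\in I\}$; it is a spectral space. The constructible topology is the coarsest topology in which all open quasi-compact subsets are clopen; proconstructible means closed in the constructible topology. *)

theory Defs
  imports "HOL-Analysis.Analysis" "HOL-Computational_Algebra.Fraction_Field"
begin

text \<open>A discrete (rank one, normalized) valuation on the fraction field K of D,
  given by its values on the nonzero elements of K (the value at 0 is irrelevant).\<close>
definition discrete_valuation :: "('a::idom fract \<Rightarrow> int) \<Rightarrow> bool" where
  "discrete_valuation v \<longleftrightarrow>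
     (\<forall>x y. x \<noteq> 0 \<longrightarrow> y \<noteq> 0 \<longrightarrow> v (x * y) = v x + v y) \<and>
     (\<forall>x y. x \<noteq> 0 \<longrightarrow> y \<noteq> 0 \<longrightarrow> x + y \<noteq> 0 \<longrightarrow> v (x + y) \<ge> min (v x) (v y)) \<and>
     (\<forall>n. \<exists>x. x \<noteq> 0 \<and> v x = n)"

text \<open>D (the whole type 'a) is a Krull domain: there is a family of discrete valuation
  rings V_v = {x. x = 0 \<or> v x \<ge> 0} of the fraction field whose intersection is D and
  such that every nonzero element of D is a unit in all but finitely many V_v.\<close>
definition krull_domain :: "'a::idom itself \<Rightarrow> bool" where
  "krull_domain _ \<longleftrightarrow>
     (\<exists>\<V> :: ('a fract \<Rightarrow> int) set.
        (\<forall>v\<in>\<V>. discrete_valuation v) \<and>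
        range (\<lambda>a::'a. Fract a 1) = {x. \<forall>v\<in>\<V>. x = 0 \<or> v x \<ge> 0} \<and>
        (\<forall>a::'a. a \<noteq> 0 \<longrightarrow> finite {v\<in>\<V>. v (Fract a 1) \<noteq> 0}))"

definition is_ideal :: "'a::comm_ring_1 set \<Rightarrow> bool" where
  "is_ideal I \<longleftrightarrow> 0 \<in> I \<and> (\<forall>x\<in>I. \<forall>y\<in>I. x + y \<in> I) \<and> (\<forall>r. \<forall>x\<in>I. r * x \<in> I)"

definition ideals :: "'a::comm_ring_1 set set" where
  "ideals = {I. is_ideal I}"

definition principal_ideals :: "'a::comm_ring_1 set set" where
  "principal_ideals = {I. \<exists>a. I = {a * r | r. True}}"

definition zariski_basic :: "'a::comm_ring_1 list \<Rightarrow> 'a set set" where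
  "zariski_basic xs = {I \<in> ideals. set xs \<subseteq> I}"

definition zariski_ideals :: "'a::comm_ring_1 set topology" where
  "zariski_ideals = topology_generated_by (range zariski_basic)"

text \<open>The constructible topology of a topological space X: the coarsest topology on
  topspace X in which every open quasi-compact subset is clopen, i.e. the topology
  generated by the open quasi-compact sets and their complements.\<close>
definition constructible_topology :: "'b topology \<Rightarrow> 'b topology" where
  "constructible_topology X = topology_generated_by
     ({U. openin X U \<and> compactin X U} \<union>
      {topspace X - U | U. openin X U \<and> compactin X U})"

definition proconstructible :: "'b topology \<Rightarrow> 'b set \<Rightarrow> bool" where
  "proconstructible X S \<longleftrightarrow> closedin (constructible_topology X) S"

end

(* A divisor a of a nonzero x in a Krull domain is determined up to units by the values v(a),
   which lie between 0 and v(x) and vanish outside the finitely many valuations with v(x) \<noteq> 0;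
   so x lies in only finitely many principal ideals. Every non-principal ideal I is nonzero, hence
   contains such an x. In the constructible topology the sets B(x) are open and finite sets are
   closed (the topology is T1, since B(z) and its complement separate any two ideals), so B(x)
   minus the finitely many principal ideals containing x is a neighbourhood of I avoiding Princ(D). *)

theory Submission
  imports Defs
begin

lemma topspace_constructible_topology [simp]:
  "topspace (constructible_topology X) = topspace X"
proof -
  let ?\<A> = "{U. openin X U \<and> compactin X U}"
  let ?\<B> = "{topspace X - U | U. openin X U \<and> compactin X U}"
  have "\<Union>?\<A> \<subseteq> topspace X"
    by (rule Union_least) (simp add: openin_subset)
  moreover have "\<Union>?\<B> \<subseteq> topspace X"
    by (rule Union_least) blast
  moreover have "topspace X \<in> ?\<B>"
    by (rule CollectI, rule exI[of _ "{}"]) simp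
  ultimately have "\<Union>(?\<A> \<union> ?\<B>) = topspace X"
    unfolding Union_Un_distrib by (intro antisym Un_least le_supI2 Union_upper)
  then show ?thesis
    unfolding constructible_topology_def topology_generated_by_topspace .
qed

lemma openin_constructible_topology:
  "openin X U \<Longrightarrow> compactin X U \<Longrightarrow> openin (constructible_topology X) U"
  unfolding constructible_topology_def by (rule topology_generated_by_Basis) blast

lemma openin_constructible_topology_complement:
  "openin X U \<Longrightarrow> compactin X U \<Longrightarrow> openin (constructible_topology X) (topspace X - U)"
  unfolding constructible_topology_def by (rule topology_generated_by_Basis) blast

lemma t1_space_constructible_topology:
  assumes "\<And>x y. \<lbrakk>x \<in> topspace X; y \<in> topspace X; x \<noteq> y\<rbrakk>
             \<Longrightarrow> \<exists>U. openin X U \<and> compactin X U \<and> (x \<in> U \<longleftrightarrow> y \<notin> U)"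
  shows "t1_space (constructible_topology X)"
  unfolding t1_space_def topspace_constructible_topology
proof (intro ballI impI)
  fix x y assume "x \<in> topspace X" "y \<in> topspace X" "x \<noteq> y"
  then obtain U where U: "openin X U" "compactin X U" "x \<in> U \<longleftrightarrow> y \<notin> U"
    using assms by blast
  show "\<exists>V. openin (constructible_topology X) V \<and> x \<in> V \<and> y \<notin> V"
  proof (cases "x \<in> U")
    case True
    then show ?thesis
      using U openin_constructible_topology[OF U(1,2)] by blast
  next
    case False
    with U \<open>x \<in> topspace X\<close> have "x \<in> topspace X - U" "y \<notin> topspace X - U"
      by auto
    then show ?thesis
      using openin_constructible_topology_complement[OF U(1,2)] by blast
  qed
qed

lemma topspace_zariski_ideals [simp]:
  "topspace zariski_ideals = (ideals :: 'a::comm_ring_1 set set)"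
proof -
  have "zariski_basic [] = (ideals :: 'a set set)" and "\<And>xs. zariski_basic xs \<subseteq> ideals"
    by (auto simp: zariski_basic_def)
  then have "\<Union>(range zariski_basic) = (ideals :: 'a set set)"
    by blast
  then show ?thesis
    unfolding zariski_ideals_def topology_generated_by_topspace .
qed

lemma openin_zariski_basic: "openin zariski_ideals (zariski_basic xs)"
  unfolding zariski_ideals_def by (rule topology_generated_by_Basis) simp

lemma zariski_open_upward_closed:
  assumes "openin zariski_ideals U" "I \<in> U" "I \<subseteq> J" "J \<in> ideals"
  shows "J \<in> U"
proof -
  have "generate_topology_on (range zariski_basic) U"
    using assms(1) unfolding zariski_ideals_def by (rule openin_topology_generated_by)
  then show ?thesis
    using assms(2,3)
  proof (induction arbitrary: I)
    case (Basis U)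
    then show ?case
      using assms(4) by (auto simp: zariski_basic_def)
  qed blast+
qed

definition ideal_generated :: "'a::comm_ring_1 set \<Rightarrow> 'a set" where
  "ideal_generated A = \<Inter>{I \<in> ideals. A \<subseteq> I}"

lemma ideal_generated_in_ideals: "ideal_generated A \<in> ideals"
  unfolding ideal_generated_def ideals_def is_ideal_def by auto

lemma subset_ideal_generated: "A \<subseteq> ideal_generated A"
  unfolding ideal_generated_def by blast

lemma ideal_generated_least: "I \<in> ideals \<Longrightarrow> A \<subseteq> I \<Longrightarrow> ideal_generated A \<subseteq> I"
  unfolding ideal_generated_def by blast

lemma compactin_zariski_basic: "compactin zariski_ideals (zariski_basic xs)"
  unfolding compactin_def
proof (intro conjI allI impI)
  show "zariski_basic xs \<subseteq> topspace zariski_ideals"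
    by (auto simp: zariski_basic_def)
next
  fix \<U> assume \<U>: "Ball \<U> (openin zariski_ideals) \<and> zariski_basic xs \<subseteq> \<Union>\<U>"
  have "ideal_generated (set xs) \<in> zariski_basic xs"
    unfolding zariski_basic_def using ideal_generated_in_ideals subset_ideal_generated by blast
  then obtain U where U: "U \<in> \<U>" "ideal_generated (set xs) \<in> U"
    using \<U> by blast
  have "zariski_basic xs \<subseteq> U"
  proof
    fix J assume "J \<in> zariski_basic xs"
    then have "J \<in> ideals" "set xs \<subseteq> J"
      unfolding zariski_basic_def by auto
    then show "J \<in> U"
      using zariski_open_upward_closed[OF _ U(2)] ideal_generated_least U(1) \<U> by blast
  qed
  then show "\<exists>\<F>. finite \<F> \<and> \<F> \<subseteq> \<U> \<and> zariski_basic xs \<subseteq> \<Union>\<F>"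
    using U(1) by (intro exI[of _ "{U}"]) simp
qed

lemma t1_space_constructible_zariski:
  "t1_space (constructible_topology (zariski_ideals :: 'a::comm_ring_1 set topology))"
proof (rule t1_space_constructible_topology)
  fix I J :: "'a set"
  assume "I \<in> topspace zariski_ideals" "J \<in> topspace zariski_ideals" "I \<noteq> J"
  moreover obtain z where "z \<in> I \<longleftrightarrow> z \<notin> J"
    using \<open>I \<noteq> J\<close> by blast
  ultimately have "I \<in> zariski_basic [z] \<longleftrightarrow> J \<notin> zariski_basic [z]"
    by (simp add: zariski_basic_def)
  then show "\<exists>U. openin zariski_ideals U \<and> compactin zariski_ideals U \<and> (I \<in> U \<longleftrightarrow> J \<notin> U)"
    using openin_zariski_basic compactin_zariski_basic by blast
qed

lemma proconstructible_zariski_if_finitely_many_containing: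
  fixes S :: "'a::comm_ring_1 set set"
  assumes "S \<subseteq> ideals"
    and "\<And>I. I \<in> ideals \<Longrightarrow> I \<notin> S \<Longrightarrow> \<exists>x\<in>I. finite {J \<in> S. x \<in> J}"
  shows "proconstructible zariski_ideals S"
proof -
  let ?C = "constructible_topology (zariski_ideals :: 'a set topology)"
  have "openin ?C (ideals - S)"
    unfolding openin_subopen[of _ "ideals - S"]
  proof
    fix I assume I: "I \<in> ideals - S"
    then obtain x where "x \<in> I" and fin: "finite {J \<in> S. x \<in> J}"
      using assms(2) by blast
    define T where "T = zariski_basic [x] - {J \<in> S. x \<in> J}"
    have "openin ?C (zariski_basic [x])"
      by (intro openin_constructible_topology openin_zariski_basic compactin_zariski_basic)
    moreover have "closedin ?C {J \<in> S. x \<in> J}"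
      using t1_space_constructible_zariski fin assms(1) by (auto simp: t1_space_closedin_finite)
    ultimately have "openin ?C T"
      unfolding T_def by (rule openin_diff)
    moreover have "I \<in> T" "T \<subseteq> ideals - S"
      using I \<open>x \<in> I\<close> by (auto simp: T_def zariski_basic_def)
    ultimately show "\<exists>T. openin ?C T \<and> I \<in> T \<and> T \<subseteq> ideals - S"
      by blast
  qed
  then show ?thesis
    unfolding proconstructible_def closedin_def using assms(1) by simp
qed

definition principal_ideal :: "'a::comm_ring_1 \<Rightarrow> 'a set" where
  "principal_ideal a = {x. a dvd x}"

lemma principal_ideals_eq_range: "principal_ideals = range principal_ideal"
proof -
  have "{a * r | r. True} = principal_ideal a" for a :: 'a
    by (auto simp: principal_ideal_def)
  then show ?thesis
    unfolding principal_ideals_def by auto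
qed

lemma principal_ideal_in_ideals: "principal_ideal a \<in> ideals"
  unfolding principal_ideal_def ideals_def is_ideal_def by auto

lemma principal_ideals_subset_ideals: "principal_ideals \<subseteq> ideals"
  by (auto simp: principal_ideals_eq_range principal_ideal_in_ideals)

lemma principal_ideal_zero: "principal_ideal 0 = {0}"
  by (auto simp: principal_ideal_def)

lemma nonzero_if_not_principal_ideal:
  assumes "I \<in> ideals" "I \<notin> principal_ideals"
  shows "\<exists>x\<in>I. x \<noteq> 0"
proof -
  have "{0} \<in> principal_ideals"
    unfolding principal_ideals_eq_range principal_ideal_zero[symmetric] by (rule rangeI)
  with assms(2) have "I \<noteq> {0}"
    by auto
  moreover have "0 \<in> I"
    using assms(1) by (simp add: ideals_def is_ideal_def)
  ultimately show ?thesis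
    by blast
qed

lemma principal_ideal_eqI: "a dvd b \<Longrightarrow> b dvd a \<Longrightarrow> principal_ideal a = principal_ideal b"
  by (auto simp: principal_ideal_def intro: dvd_trans)

lemma principal_ideals_containing: "{J \<in> principal_ideals. x \<in> J} = principal_ideal ` {a. a dvd x}"
  by (auto simp: principal_ideals_eq_range principal_ideal_def)

lemma finite_image_factors_through:
  assumes "finite (g ` A)" and "\<And>a b. a \<in> A \<Longrightarrow> b \<in> A \<Longrightarrow> g a = g b \<Longrightarrow> h a = h b"
  shows "finite (h ` A)"
proof -
  have "h a = h (inv_into A g (g a))" if "a \<in> A" for a
    using that by (intro assms(2)) (simp_all add: inv_into_into f_inv_into_f)
  then have "h ` A = (\<lambda>y. h (inv_into A g y)) ` g ` A"
    unfolding image_image by (rule image_cong[OF refl])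
  then show ?thesis
    using assms(1) by simp
qed

lemma Fract_1_eq_iff [simp]: "Fract (a::'a::idom) 1 = Fract b 1 \<longleftrightarrow> a = b"
  by (simp add: eq_fract(1))

lemma Fract_1_eq_0_iff [simp]: "Fract (a::'a::idom) 1 = 0 \<longleftrightarrow> a = 0"
  by (simp add: Zero_fract_def eq_fract(1))

locale krull_valuations =
  fixes \<V> :: "('a::idom fract \<Rightarrow> int) set"
  assumes valuations: "v \<in> \<V> \<Longrightarrow> discrete_valuation v"
    and integral_elements: "range (\<lambda>a::'a. Fract a 1) = {x. \<forall>v\<in>\<V>. x = 0 \<or> v x \<ge> 0}"
    and finite_support: "a \<noteq> 0 \<Longrightarrow> finite {v\<in>\<V>. v (Fract a 1) \<noteq> 0}"

lemma krull_domain_iff_krull_valuations: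
  "krull_domain TYPE('a::idom) \<longleftrightarrow> (\<exists>\<V> :: ('a fract \<Rightarrow> int) set. krull_valuations \<V>)"
  unfolding krull_domain_def krull_valuations_def by (simp add: Ball_def)

context krull_valuations
begin

lemma valuation_mult: "v \<in> \<V> \<Longrightarrow> p \<noteq> 0 \<Longrightarrow> q \<noteq> 0 \<Longrightarrow> v (p * q) = v p + v q"
  using valuations unfolding discrete_valuation_def by blast

lemma valuation_nonneg:
  assumes "v \<in> \<V>" "a \<noteq> 0"
  shows "0 \<le> v (Fract a 1)"
proof -
  have "Fract a 1 \<in> {x. \<forall>v\<in>\<V>. x = 0 \<or> v x \<ge> 0}"
    unfolding integral_elements[symmetric] by (rule rangeI)
  then show ?thesis
    using assms by simp
qed

lemma valuation_of_divisor:
  assumes "v \<in> \<V>" "x \<noteq> 0" "a dvd x"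
  shows "v (Fract a 1) \<in> {0..v (Fract x 1)}"
proof -
  obtain k where k: "x = a * k"
    using assms(3) by blast
  with assms(2) have "a \<noteq> 0" "k \<noteq> 0"
    by auto
  moreover have "Fract x 1 = Fract a 1 * Fract k 1"
    using k by simp
  ultimately have "v (Fract x 1) = v (Fract a 1) + v (Fract k 1)"
    using valuation_mult[OF assms(1)] by (simp del: mult_fract)
  then show ?thesis
    using valuation_nonneg[OF assms(1)] \<open>a \<noteq> 0\<close> \<open>k \<noteq> 0\<close> by fastforce
qed

lemma dvd_if_valuations_le:
  assumes "a \<noteq> 0" "b \<noteq> 0" and le: "\<And>v. v \<in> \<V> \<Longrightarrow> v (Fract b 1) \<le> v (Fract a 1)"
  shows "b dvd a"
proof -
  define q where "q = Fract a b"
  have q: "q * Fract b 1 = Fract a 1"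
    unfolding q_def using assms(2) by (simp add: eq_fract(1) mult.commute)
  then have "q \<noteq> 0"
    using assms(1) by auto
  have "v q \<ge> 0" if "v \<in> \<V>" for v
    using valuation_mult[OF that \<open>q \<noteq> 0\<close>, of "Fract b 1"] le[OF that] q assms(2) by simp
  then have "q \<in> range (\<lambda>a::'a. Fract a 1)"
    unfolding integral_elements by blast
  then obtain c where "q = Fract c 1"
    by blast
  with q have "a = c * b"
    by simp
  then show ?thesis
    by simp
qed

lemma finite_principal_ideals_containing:
  fixes x :: 'a
  assumes "x \<noteq> 0"
  shows "finite {J \<in> principal_ideals. x \<in> J}"
proof -
  define F where "F = {v\<in>\<V>. v (Fract x 1) \<noteq> 0}"
  define g where "g a = restrict (\<lambda>v. v (Fract a 1)) F" for a :: 'a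
  have "g a \<in> PiE F (\<lambda>v. {0..v (Fract x 1)})" if "a dvd x" for a
    unfolding g_def restrict_PiE_iff F_def using valuation_of_divisor[OF _ assms that] by simp
  then have "g ` {a. a dvd x} \<subseteq> PiE F (\<lambda>v. {0..v (Fract x 1)})"
    by blast
  moreover have "finite (PiE F (\<lambda>v. {0..v (Fract x 1)}))"
    using finite_support[OF assms] by (intro finite_PiE) (simp_all add: F_def)
  ultimately have finite_g: "finite (g ` {a. a dvd x})"
    by (rule finite_subset)
  have same_ideal: "principal_ideal a = principal_ideal b"
    if "a dvd x" "b dvd x" "g a = g b" for a b
  proof -
    have same_values: "\<forall>v\<in>\<V>. v (Fract a 1) = v (Fract b 1)"
    proof
      fix v assume "v \<in> \<V>"
      show "v (Fract a 1) = v (Fract b 1)"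
      proof (cases "v \<in> F")
        case True
        have "g a v = g b v"
          using \<open>g a = g b\<close> by simp
        with True show ?thesis
          by (simp add: g_def)
      next
        case False
        with \<open>v \<in> \<V>\<close> have "v (Fract x 1) = 0"
          by (simp add: F_def)
        then show ?thesis
          using valuation_of_divisor[OF \<open>v \<in> \<V>\<close> assms] \<open>a dvd x\<close> \<open>b dvd x\<close> by simp
      qed
    qed
    have "a \<noteq> 0" "b \<noteq> 0"
      using that assms by auto
    have "a dvd b"
      using \<open>b \<noteq> 0\<close> \<open>a \<noteq> 0\<close> by (rule dvd_if_valuations_le) (simp add: same_values)
    moreover have "b dvd a"
      using \<open>a \<noteq> 0\<close> \<open>b \<noteq> 0\<close> by (rule dvd_if_valuations_le) (simp add: same_values)
    ultimately show ?thesis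
      by (rule principal_ideal_eqI)
  qed
  show ?thesis
    unfolding principal_ideals_containing using finite_g
    by (rule finite_image_factors_through) (use same_ideal in blast)
qed

end

theorem theorem5p11:
  assumes "krull_domain TYPE('a::idom)"
  shows "proconstructible (zariski_ideals :: 'a set topology) principal_ideals"
proof (rule proconstructible_zariski_if_finitely_many_containing)
  obtain \<V> :: "('a fract \<Rightarrow> int) set" where "krull_valuations \<V>"
    using assms krull_domain_iff_krull_valuations by blast
  show "principal_ideals \<subseteq> (ideals :: 'a set set)"
    by (rule principal_ideals_subset_ideals)
  show "\<exists>x\<in>I. finite {J \<in> principal_ideals. x \<in> J}"
    if "I \<in> ideals" "I \<notin> principal_ideals" for I :: "'a set"
    using nonzero_if_not_principal_ideal[OF that]
      krull_valuations.finite_principal_ideals_containing[OF \<open>krull_valuations \<V>\<close>]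
    by blast
qed

end
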